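(* Let $F\dashv G$ be a Galois connection between lattices $\mathcal{L}$ and $\mathcal{L}'$, let $\ell\in\mathcal{L}$, and let $L,L'\subseteq\mathcal{L}$ be finite with $L\downarrow\ell=L'\downarrow\ell$. Then $C_{F\dashv G}(L)\downarrow\ell=C_{F\dashv G}(L')\downarrow\ell$.
   Context: A lattice means a partially ordered set with least element $\bot$ in which any two elements have a least upper bound $\sqcup$; $\bigsqcup S$ denotes the least upper bound of a finite set ($\bigsqcup\emptyset=\bot$). For $S\subseteq\mathcal{L}$, $S\downarrow\ell=\{\jmath\in S : \jmath\sqsubseteq\ell\}$. A Galois connection $F\dashv G$ is a pair $F:\mathcal{L}\to\mathcal{L}'$, $G:\mathcal{L}'\to\mathcal{L}$ with $F(\ell)\sqsubseteq\jmath\iff\ell\sqsubseteq G(\jmath)$. For a function $H$, $H^*(S)=\{H(s):s\in S\}$. The closure set is $C(S)=\{\bigsqcup S' : S'\subseteq S\}$ and $C_{F\dashv G}(S)=G^*(C(F^*(S)))$. *)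

theory Defs
  imports Main
begin

text \<open>A lattice in the paper's sense: a partial order with least element and binary joins,
  i.e. the type class bounded_semilattice_sup_bot.\<close>

definition galois_conn :: "('a::bounded_semilattice_sup_bot \<Rightarrow> 'b::bounded_semilattice_sup_bot)
    \<Rightarrow> ('b \<Rightarrow> 'a) \<Rightarrow> bool" where
  "galois_conn F G \<longleftrightarrow> (\<forall>l j. F l \<le> j \<longleftrightarrow> l \<le> G j)"

definition bigsup :: "'a::bounded_semilattice_sup_bot set \<Rightarrow> 'a" where
  "bigsup S = Finite_Set.fold sup bot S"

definition down :: "'a::order set \<Rightarrow> 'a \<Rightarrow> 'a set" where
  "down S l = {j \<in> S. j \<le> l}"

definition closure_set :: "'a::bounded_semilattice_sup_bot set \<Rightarrow> 'a set" where
  "closure_set S = {bigsup S' | S'. S' \<subseteq> S \<and> finite S'}"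

definition closure_gc :: "('a::bounded_semilattice_sup_bot \<Rightarrow> 'b::bounded_semilattice_sup_bot)
    \<Rightarrow> ('b \<Rightarrow> 'a) \<Rightarrow> 'a set \<Rightarrow> 'a set" where
  "closure_gc F G S = G ` closure_set (F ` S)"

end

theory Submission
  imports Defs
begin

text \<open>If \<open>G (bigsup T) \<le> l\<close> with \<open>T \<subseteq> F ` L\<close>, then every \<open>a \<in> L\<close> with \<open>F a \<in> T\<close> satisfies
  \<open>a \<le> G (F a) \<le> G (bigsup T) \<le> l\<close>, so in fact \<open>T \<subseteq> F ` down L l\<close>. Hence the part of
  \<open>closure_gc F G L\<close> below \<open>l\<close> depends only on \<open>down L l\<close>.\<close>

lemma bigsup_upper:
  fixes T :: "'a::bounded_semilattice_sup_bot set"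
  assumes "finite T" "x \<in> T"
  shows "x \<le> bigsup T"
  using assms
proof (induction T rule: finite_induct)
  case empty
  then show ?case by simp
next
  case (insert y T)
  interpret comp_fun_idem "sup :: 'a \<Rightarrow> 'a \<Rightarrow> 'a"
    by (fact comp_fun_idem_sup)
  have "bigsup (insert y T) = sup y (bigsup T)"
    unfolding bigsup_def using insert.hyps by (simp add: fold_insert_idem)
  then show ?case
    using insert by (auto intro: le_supI2)
qed

lemma galois_conn_unit:
  assumes "galois_conn F G"
  shows "a \<le> G (F a)"
  using assms unfolding galois_conn_def by blast

lemma galois_conn_mono_right:
  assumes "galois_conn F G" and "x \<le> y"
  shows "G x \<le> G y"
  using assms unfolding galois_conn_def by (meson order_refl order_trans)

lemma galois_conn_le_bigsup:
  assumes "galois_conn F G" and "finite T" and "F a \<in> T"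
  shows "a \<le> G (bigsup T)"
  using galois_conn_unit[OF assms(1)] galois_conn_mono_right[OF assms(1) bigsup_upper[OF assms(2,3)]]
  by (rule order_trans)

lemma closure_gc_mono:
  assumes "S \<subseteq> S'"
  shows "closure_gc F G S \<subseteq> closure_gc F G S'"
  using assms unfolding closure_gc_def closure_set_def by blast

lemma down_closure_gc_down:
  assumes gc: "galois_conn F G"
  shows "down (closure_gc F G (down L l)) l = down (closure_gc F G L) l"
proof
  show "down (closure_gc F G (down L l)) l \<subseteq> down (closure_gc F G L) l"
    using closure_gc_mono[of "down L l" L F G] unfolding down_def by auto
next
  show "down (closure_gc F G L) l \<subseteq> down (closure_gc F G (down L l)) l"
  proof
    fix x
    assume "x \<in> down (closure_gc F G L) l"
    then obtain T where T: "T \<subseteq> F ` L" "finite T" and x: "x = G (bigsup T)" "x \<le> l"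
      unfolding down_def closure_gc_def closure_set_def by auto
    have "T \<subseteq> F ` down L l"
    proof
      fix t
      assume "t \<in> T"
      then obtain a where a: "a \<in> L" "t = F a"
        using T(1) by auto
      have "a \<le> l"
        using galois_conn_le_bigsup[OF gc T(2)] \<open>t \<in> T\<close> a(2) x by fastforce
      then show "t \<in> F ` down L l"
        using a unfolding down_def by auto
    qed
    then show "x \<in> down (closure_gc F G (down L l)) l"
      using T(2) x unfolding down_def closure_gc_def closure_set_def by auto
  qed
qed

theorem mainTheorem20:
  fixes F :: "'a::bounded_semilattice_sup_bot \<Rightarrow> 'b::bounded_semilattice_sup_bot"
    and G :: "'b \<Rightarrow> 'a" and l :: 'a and L L' :: "'a set"
  assumes "galois_conn F G"
    and "finite L" and "finite L'"
    and "down L l = down L' l"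
  shows "down (closure_gc F G L) l = down (closure_gc F G L') l"
  using down_closure_gc_down[OF assms(1), of L l] down_closure_gc_down[OF assms(1), of L' l] assms(4)
  by simp

end
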